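(* Let $G=(V,E)$ be a control flow graph, let $p$ be a predicate node with successors $s_1,s_2$ in $G$ and with at least two successors in $A_p$, and let $i\in\{1,2\}$. For each maximal path from $s_i$ in $G$ there exists a maximal path in $A_p$ starting from a node of $V_i$ with the same order of the first occurrences of all nodes from $V_p\setminus\{p\}$, and vice versa (for each maximal path in $A_p$ starting from a node of $V_i$ there exists a maximal path from $s_i$ in $G$ with the same order of the first occurrences of all nodes from $V_p\setminus\{p\}$).
   Context: A control flow graph (CFG) is a finite directed graph $G=(V,E)$ in which every node has at most two outgoing edges; nodes with exactly two outgoing edges are predicate nodes. A path from $n_1$ is a nonempty finite or infinite sequence of nodes with each adjacent pair an edge; it is maximal if it is infinite or its last node has no successor. $V_p$ is the set of nodes occurring on all maximal paths from $p$ in $G$. For $V'\subseteq V$, a $V'$-interval from $x$ to $y$ is a finite path $n_1\ldots n_k$ in $G$ with $k\ge 2$, $n_1=x\in V'$, $n_k=y\in V'$, and $n_i\notin V'$ for $1<i<k$. $A_p$ is the directed graph with node set $V_p$ and an edge $(x,y)$ iff there is a $V_p$-interval from $x$ to $y$ in $G$. For $i\in\{1,2\}$, $V_i$ is the set of nodes $n\in V_p$ such that there is a finite path in $G$ from $s_i$ to $n$ whose nodes other than the last one all lie outside $V_p$ (i.e., a path $s_i\ldots n\in (V\setminus V_p)^*.V_p$; possibly $n=s_i$). *)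

theory Defs
  imports Main
begin

datatype 'a path = FinP "'a list" | InfP "nat \<Rightarrow> 'a"

definition succs :: "('a \<times> 'a) set \<Rightarrow> 'a \<Rightarrow> 'a set" where
  "succs E n = {m. (n, m) \<in> E}"

definition cfg :: "'a set \<Rightarrow> ('a \<times> 'a) set \<Rightarrow> bool" where
  "cfg V E \<longleftrightarrow> finite V \<and> E \<subseteq> V \<times> V \<and> (\<forall>n\<in>V. card (succs E n) \<le> 2)"

fun valid_idx :: "'a path \<Rightarrow> nat \<Rightarrow> bool" where
  "valid_idx (FinP xs) i = (i < length xs)"
| "valid_idx (InfP f) i = True"

fun at :: "'a path \<Rightarrow> nat \<Rightarrow> 'a" where
  "at (FinP xs) i = xs ! i"
| "at (InfP f) i = f i"

definition is_path :: "'a set \<Rightarrow> ('a \<times> 'a) set \<Rightarrow> 'a path \<Rightarrow> bool" where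
  "is_path V E \<pi> \<longleftrightarrow> valid_idx \<pi> 0 \<and> (\<forall>i. valid_idx \<pi> i \<longrightarrow> at \<pi> i \<in> V)
     \<and> (\<forall>i. valid_idx \<pi> (Suc i) \<longrightarrow> (at \<pi> i, at \<pi> (Suc i)) \<in> E)"

fun maximal_end :: "('a \<times> 'a) set \<Rightarrow> 'a path \<Rightarrow> bool" where
  "maximal_end E (FinP xs) = (succs E (last xs) = {})"
| "maximal_end E (InfP f) = True"

definition maximal_path :: "'a set \<Rightarrow> ('a \<times> 'a) set \<Rightarrow> 'a path \<Rightarrow> bool" where
  "maximal_path V E \<pi> \<longleftrightarrow> is_path V E \<pi> \<and> maximal_end E \<pi>"

definition pnodes :: "'a path \<Rightarrow> 'a set" where
  "pnodes \<pi> = {at \<pi> i | i. valid_idx \<pi> i}"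

definition Vp :: "'a set \<Rightarrow> ('a \<times> 'a) set \<Rightarrow> 'a \<Rightarrow> 'a set" where
  "Vp V E p = {n \<in> V. \<forall>\<pi>. maximal_path V E \<pi> \<and> at \<pi> 0 = p \<longrightarrow> n \<in> pnodes \<pi>}"

definition interval :: "'a set \<Rightarrow> ('a \<times> 'a) set \<Rightarrow> 'a set \<Rightarrow> 'a list \<Rightarrow> 'a \<Rightarrow> 'a \<Rightarrow> bool" where
  "interval V E V' xs x y \<longleftrightarrow> is_path V E (FinP xs) \<and> length xs \<ge> 2 \<and>
     hd xs = x \<and> x \<in> V' \<and> last xs = y \<and> y \<in> V' \<and>
     (\<forall>i. 0 < i \<and> i < length xs - 1 \<longrightarrow> xs ! i \<notin> V')"

text \<open>Edges of A_p (its node set is Vp V E p).\<close>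
definition Ap_edges :: "'a set \<Rightarrow> ('a \<times> 'a) set \<Rightarrow> 'a \<Rightarrow> ('a \<times> 'a) set" where
  "Ap_edges V E p = {(x, y). \<exists>xs. interval V E (Vp V E p) xs x y}"

definition Vi :: "'a set \<Rightarrow> ('a \<times> 'a) set \<Rightarrow> 'a \<Rightarrow> 'a \<Rightarrow> 'a set" where
  "Vi V E p s = {n \<in> Vp V E p. \<exists>xs. is_path V E (FinP xs) \<and> hd xs = s \<and> last xs = n \<and>
      (\<forall>x\<in>set (butlast xs). x \<notin> Vp V E p)}"

definition first_idx :: "'a path \<Rightarrow> 'a \<Rightarrow> nat" where
  "first_idx \<pi> x = (LEAST i. valid_idx \<pi> i \<and> at \<pi> i = x)"

definition fo_order :: "'a set \<Rightarrow> 'a path \<Rightarrow> 'a set \<times> ('a \<times> 'a) set" where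
  "fo_order W \<pi> = (W \<inter> pnodes \<pi>,
     {(x, y). x \<in> W \<inter> pnodes \<pi> \<and> y \<in> W \<inter> pnodes \<pi> \<and> first_idx \<pi> x < first_idx \<pi> y})"

end

theory Submission
  imports Defs
begin

text \<open>
  Work with an arbitrary node set U in place of V_p. Deleting the nodes outside U from a path
  of G that starts and ends in U yields a path of the U-interval graph, and conversely every
  path of the interval graph unfolds to such a path of G; deleting nodes does not change the
  relative order of first occurrences of the remaining ones. Every maximal path from a
  successor s of p visits all of V_p - {p}, since putting p in front of it gives a maximal path
  from p. For the converse direction it remains to see that a maximal interval path \<rho> from an
  entry node also visits all of V_p - {p}: unfolding \<rho> gives a maximal path of G from s whose
  nodes in U all lie on \<rho>. If \<rho> is finite, continue with any maximal path of G from its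
  last node, which can never return to U; if \<rho> is infinite, it repeats a node of the finite
  set U and the unfolded cycle between the two occurrences can be traversed forever.
\<close>

definition list_path :: "'a set \<Rightarrow> ('a \<times> 'a) set \<Rightarrow> 'a list \<Rightarrow> bool" where
  "list_path V E xs \<longleftrightarrow> xs \<noteq> [] \<and> set xs \<subseteq> V \<and> successively (\<lambda>x y. (x, y) \<in> E) xs"

lemma is_path_FinP_iff: "is_path V E (FinP xs) \<longleftrightarrow> list_path V E xs"
  unfolding is_path_def list_path_def successively_conv_nth
  by (auto simp: set_conv_nth)

lemma list_path_append:
  "xs \<noteq> [] \<Longrightarrow> ys \<noteq> [] \<Longrightarrow>
   list_path V E (xs @ ys) \<longleftrightarrow> list_path V E xs \<and> list_path V E ys \<and> (last xs, hd ys) \<in> E"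
  unfolding list_path_def by (auto simp: successively_append_iff)

lemma list_path_appendD1: "list_path V E (xs @ ys) \<Longrightarrow> xs \<noteq> [] \<Longrightarrow> list_path V E xs"
  by (cases "ys = []") (auto simp: list_path_append)

lemma list_path_appendD2: "list_path V E (xs @ ys) \<Longrightarrow> ys \<noteq> [] \<Longrightarrow> list_path V E ys"
  by (cases "xs = []") (auto simp: list_path_append)

lemma pnodes_FinP [simp]: "pnodes (FinP xs) = set xs"
  unfolding pnodes_def by (simp add: set_conv_nth)

lemma pnodes_InfP [simp]: "pnodes (InfP f) = range f"
  unfolding pnodes_def by auto

lemma valid_idx_mono: "valid_idx \<pi> k \<Longrightarrow> i \<le> k \<Longrightarrow> valid_idx \<pi> i"
  by (cases \<pi>) auto

definition path_take :: "nat \<Rightarrow> 'a path \<Rightarrow> 'a list" where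
  "path_take n \<pi> = map (at \<pi>) [0..<n]"

definition path_prefix :: "'a list \<Rightarrow> 'a path \<Rightarrow> bool" where
  "path_prefix xs \<pi> \<longleftrightarrow> (\<forall>i<length xs. valid_idx \<pi> i \<and> at \<pi> i = xs ! i)"

lemma path_prefix_path_take: "valid_idx \<pi> k \<Longrightarrow> path_prefix (path_take (Suc k) \<pi>) \<pi>"
  unfolding path_prefix_def path_take_def
  by (auto simp del: upt_Suc simp: less_Suc_eq_le intro: valid_idx_mono)

lemma list_path_path_take:
  assumes "is_path V E \<pi>" "valid_idx \<pi> k"
  shows "list_path V E (path_take (Suc k) \<pi>)"
  using assms valid_idx_mono[OF assms(2)]
  unfolding list_path_def is_path_def path_take_def successively_conv_nth
  by (auto simp del: upt_Suc simp: nth_append)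

lemma path_prefix_subset_pnodes: "path_prefix xs \<pi> \<Longrightarrow> set xs \<subseteq> pnodes \<pi>"
  unfolding path_prefix_def pnodes_def by (auto simp: in_set_conv_nth) metis

lemma at_0_path_prefix: "path_prefix xs \<pi> \<Longrightarrow> xs \<noteq> [] \<Longrightarrow> at \<pi> 0 = hd xs"
  unfolding path_prefix_def by (simp add: hd_conv_nth)

fun prepend :: "'a list \<Rightarrow> 'a path \<Rightarrow> 'a path" where
  "prepend xs (FinP ys) = FinP (xs @ ys)"
| "prepend xs (InfP f) = InfP (\<lambda>i. if i < length xs then xs ! i else f (i - length xs))"

lemma pnodes_prepend: "pnodes (prepend xs \<sigma>) = set xs \<union> pnodes \<sigma>"
proof (cases \<sigma>)
  case (InfP f)
  have "f j \<in> pnodes (prepend xs \<sigma>)" for j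
    using InfP by (auto intro!: image_eqI[where x = "length xs + j"])
  then show ?thesis
    using InfP by (auto simp: in_set_conv_nth split: if_splits)
qed simp

lemma path_prefix_prepend: "valid_idx \<sigma> 0 \<Longrightarrow> path_prefix (xs @ [at \<sigma> 0]) (prepend xs \<sigma>)"
  by (cases \<sigma>) (auto simp: path_prefix_def nth_append less_Suc_eq)

lemma maximal_path_prepend:
  assumes "maximal_path V E \<sigma>" "list_path V E (xs @ [at \<sigma> 0])"
  shows "maximal_path V E (prepend xs \<sigma>)"
proof (cases \<sigma>)
  case (FinP ys)
  with assms(1) have ys: "list_path V E ys" "succs E (last ys) = {}"
    by (auto simp: maximal_path_def is_path_FinP_iff)
  then have "ys \<noteq> []" "at \<sigma> 0 = hd ys"
    using FinP by (auto simp: list_path_def hd_conv_nth)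
  with ys assms(2) have "list_path V E (xs @ ys)"
    by (cases "xs = []") (auto simp: list_path_append)
  with FinP ys \<open>ys \<noteq> []\<close> show ?thesis
    by (simp add: maximal_path_def is_path_FinP_iff)
next
  case (InfP f)
  have f: "f i \<in> V" "(f i, f (Suc i)) \<in> E" for i
    using assms(1) InfP by (auto simp: maximal_path_def is_path_def)
  have xs: "set xs \<subseteq> V" "successively (\<lambda>x y. (x, y) \<in> E) (xs @ [f 0])"
    using assms(2) InfP by (auto simp: list_path_def)
  have "(at (prepend xs \<sigma>) i, at (prepend xs \<sigma>) (Suc i)) \<in> E" for i
  proof -
    consider "Suc i \<le> length xs" | "Suc i > length xs" by linarith
    then show ?thesis
    proof cases
      case 1
      then show ?thesis
        using successively_nth[OF xs(2), of i] InfP by (auto simp: nth_append)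
    next
      case 2
      then have "Suc i - length xs = Suc (i - length xs)" by auto
      with 2 f InfP show ?thesis by auto
    qed
  qed
  with f xs(1) InfP show ?thesis
    by (auto simp: maximal_path_def is_path_def)
qed

lemma maximal_path_concat:
  assumes "maximal_path V E \<sigma>" "list_path V E xs" "at \<sigma> 0 = last xs"
  obtains \<pi> where "maximal_path V E \<pi>" "path_prefix xs \<pi>" "pnodes \<pi> = set xs \<union> pnodes \<sigma>"
proof
  have xs: "xs = butlast xs @ [at \<sigma> 0]"
    using assms(2,3) by (simp add: list_path_def)
  show "maximal_path V E (prepend (butlast xs) \<sigma>)"
    using maximal_path_prepend[OF assms(1)] assms(2) xs by simp
  have "valid_idx \<sigma> 0"
    using assms(1) by (simp add: maximal_path_def is_path_def)
  then show "path_prefix xs (prepend (butlast xs) \<sigma>)"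
    using path_prefix_prepend xs by metis
  have "at \<sigma> 0 \<in> pnodes \<sigma>"
    using \<open>valid_idx \<sigma> 0\<close> by (auto simp: pnodes_def)
  then show "pnodes (prepend (butlast xs) \<sigma>) = set xs \<union> pnodes \<sigma>"
    unfolding pnodes_prepend by (subst (2) xs) auto
qed

lemma maximal_path_exists:
  assumes "E \<subseteq> V \<times> V" "x \<in> V"
  obtains \<pi> where "maximal_path V E \<pi>" "at \<pi> 0 = x"
proof -
  define next_node where "next_node n = (if succs E n = {} then n else SOME m. (n, m) \<in> E)" for n
  define walk where "walk k = (next_node ^^ k) x" for k
  have walk_edge: "succs E (walk k) \<noteq> {} \<Longrightarrow> (walk k, walk (Suc k)) \<in> E" for k
    unfolding next_node_def succs_def walk_def by (auto intro: someI)
  have walk_in: "walk k \<in> V" for k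
  proof (induction k)
    case (Suc k)
    then show ?case
      using walk_edge[of k] assms(1) by (cases "succs E (walk k) = {}") (auto simp: walk_def next_node_def)
  qed (simp add: walk_def assms(2))
  show ?thesis
  proof (cases "\<exists>k. succs E (walk k) = {}")
    case True
    define n where "n = (LEAST k. succs E (walk k) = {})"
    have n: "succs E (walk n) = {}"
      unfolding n_def using True by (rule LeastI_ex)
    have "i < n \<Longrightarrow> succs E (walk i) \<noteq> {}" for i
      unfolding n_def by (rule not_less_Least)
    then have "list_path V E (map walk [0..<Suc n])"
      unfolding list_path_def successively_conv_nth
      using walk_in walk_edge by (auto simp del: upt_Suc)
    moreover have "last (map walk [0..<Suc n]) = walk n"
      by simp
    ultimately have "maximal_path V E (FinP (map walk [0..<Suc n]))"
      using n by (simp add: maximal_path_def is_path_FinP_iff del: upt_Suc)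
    then show ?thesis
      by (rule that) (simp add: walk_def del: upt_Suc)
  next
    case False
    then have "maximal_path V E (InfP walk)"
      using walk_in walk_edge by (auto simp: maximal_path_def is_path_def)
    then show ?thesis
      by (rule that) (simp add: walk_def)
  qed
qed

lemma maximal_path_extending:
  assumes "E \<subseteq> V \<times> V" "list_path V E xs"
  obtains \<pi> where "maximal_path V E \<pi>" "path_prefix xs \<pi>"
proof -
  have "last xs \<in> V"
    using assms(2) by (auto simp: list_path_def)
  then obtain \<sigma> where "maximal_path V E \<sigma>" "at \<sigma> 0 = last xs"
    using maximal_path_exists[OF assms(1)] by blast
  then show ?thesis
    using maximal_path_concat assms(2) that by blast
qed

fun first_pos :: "'a list \<Rightarrow> 'a \<Rightarrow> nat" where
  "first_pos [] x = 0"
| "first_pos (a # xs) x = (if a = x then 0 else Suc (first_pos xs x))"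

lemma nth_first_pos: "x \<in> set xs \<Longrightarrow> first_pos xs x < length xs \<and> xs ! first_pos xs x = x"
  by (induction xs) auto

lemma nth_before_first_pos: "i < first_pos xs x \<Longrightarrow> xs ! i \<noteq> x"
  by (induction xs arbitrary: i) (auto simp: nth_Cons split: nat.splits if_splits)

lemma first_pos_filter:
  assumes "x \<in> set xs" "y \<in> set xs" "P x" "P y"
  shows "first_pos (filter P xs) x < first_pos (filter P xs) y \<longleftrightarrow> first_pos xs x < first_pos xs y"
  using assms by (induction xs) auto

lemma first_idx_in:
  assumes "x \<in> pnodes \<pi>"
  shows "valid_idx \<pi> (first_idx \<pi> x) \<and> at \<pi> (first_idx \<pi> x) = x"
proof -
  obtain i where "valid_idx \<pi> i \<and> at \<pi> i = x"
    using assms by (auto simp: pnodes_def)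
  then show ?thesis
    unfolding first_idx_def by (rule LeastI)
qed

lemma first_idx_path_prefix:
  assumes "path_prefix xs \<pi>" "x \<in> set xs"
  shows "first_idx \<pi> x = first_pos xs x"
  unfolding first_idx_def
proof (rule Least_equality)
  show "valid_idx \<pi> (first_pos xs x) \<and> at \<pi> (first_pos xs x) = x"
    using nth_first_pos[OF assms(2)] assms(1) by (auto simp: path_prefix_def)
  show "first_pos xs x \<le> i" if "valid_idx \<pi> i \<and> at \<pi> i = x" for i
    using that nth_before_first_pos[of i xs x] nth_first_pos[OF assms(2)] assms(1)
    by (metis leI order.strict_trans path_prefix_def)
qed

lemma fo_order_filter_prefix:
  assumes "path_prefix xs \<pi>" "path_prefix (filter (\<lambda>v. v \<in> U) xs) \<rho>" "W \<subseteq> U" "W \<subseteq> set xs"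
  shows "fo_order W \<rho> = fo_order W \<pi>"
proof -
  have W_filter: "W \<subseteq> set (filter (\<lambda>v. v \<in> U) xs)"
    using assms(3,4) by auto
  then have pnodes: "W \<inter> pnodes \<rho> = W" "W \<inter> pnodes \<pi> = W"
    using path_prefix_subset_pnodes[OF assms(1)] path_prefix_subset_pnodes[OF assms(2)] assms(4)
    by auto
  have "first_idx \<rho> x < first_idx \<rho> y \<longleftrightarrow> first_idx \<pi> x < first_idx \<pi> y" if "x \<in> W" "y \<in> W" for x y
  proof -
    have "first_idx \<rho> z = first_pos (filter (\<lambda>v. v \<in> U) xs) z" "first_idx \<pi> z = first_pos xs z"
      if "z \<in> W" for z
      using that W_filter assms(4) first_idx_path_prefix[OF assms(1)] first_idx_path_prefix[OF assms(2)]
      by auto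
    then show ?thesis
      using that assms(3,4) first_pos_filter[of x xs y "\<lambda>v. v \<in> U"] by auto
  qed
  then show ?thesis
    unfolding fo_order_def pnodes by auto
qed

lemma path_take_covers:
  assumes "finite W" "W \<noteq> {}" "W \<subseteq> pnodes \<pi>"
  obtains N where "valid_idx \<pi> N" "at \<pi> N \<in> W" "W \<subseteq> set (path_take (Suc N) \<pi>)"
proof
  define N where "N = Max (first_idx \<pi> ` W)"
  obtain w where "w \<in> W" "N = first_idx \<pi> w"
    unfolding N_def using Max_in assms(1,2) by blast
  then show "valid_idx \<pi> N" "at \<pi> N \<in> W"
    using first_idx_in[of w \<pi>] assms(3) by auto
  have "w' \<in> set (path_take (Suc N) \<pi>)" if "w' \<in> W" for w'
  proof -
    have "first_idx \<pi> w' \<le> N"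
      unfolding N_def using that assms(1) by simp
    then show ?thesis
      using first_idx_in[of w' \<pi>] that assms(3) unfolding path_take_def
      by (auto simp del: upt_Suc intro!: image_eqI[where x = "first_idx \<pi> w'"])
  qed
  then show "W \<subseteq> set (path_take (Suc N) \<pi>)" ..
qed

definition interval_edges :: "'a set \<Rightarrow> ('a \<times> 'a) set \<Rightarrow> 'a set \<Rightarrow> ('a \<times> 'a) set" where
  "interval_edges V E U = {(x, y). \<exists>xs. interval V E U xs x y}"

lemma Ap_edges_eq_interval_edges: "Ap_edges V E p = interval_edges V E (Vp V E p)"
  unfolding Ap_edges_def interval_edges_def ..

lemma interval_edges_subset: "interval_edges V E U \<subseteq> U \<times> U"
  unfolding interval_edges_def interval_def by auto

lemma interval_iff:
  "interval V E U xs x y \<longleftrightarrow>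
     x \<in> U \<and> y \<in> U \<and> list_path V E xs \<and> (\<exists>mid. xs = x # mid @ [y] \<and> (\<forall>v\<in>set mid. v \<notin> U))"
  (is "_ \<longleftrightarrow> ?rhs")
proof -
  have inner: "(\<forall>i. 0 < i \<and> i < length (x # mid @ [y]) - 1 \<longrightarrow> (x # mid @ [y]) ! i \<notin> U)
      \<longleftrightarrow> (\<forall>v\<in>set mid. v \<notin> U)" for mid
  proof
    assume idx: "\<forall>i. 0 < i \<and> i < length (x # mid @ [y]) - 1 \<longrightarrow> (x # mid @ [y]) ! i \<notin> U"
    have "(x # mid @ [y]) ! Suc j \<notin> U" if "j < length mid" for j
      using that spec[OF idx, of "Suc j"] by simp
    then show "\<forall>v\<in>set mid. v \<notin> U"
      by (auto simp: in_set_conv_nth nth_append)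
  next
    assume mid: "\<forall>v\<in>set mid. v \<notin> U"
    show "\<forall>i. 0 < i \<and> i < length (x # mid @ [y]) - 1 \<longrightarrow> (x # mid @ [y]) ! i \<notin> U"
    proof (intro allI impI)
      fix i assume "0 < i \<and> i < length (x # mid @ [y]) - 1"
      then obtain j where "i = Suc j" "j < length mid"
        by (cases i) auto
      then show "(x # mid @ [y]) ! i \<notin> U"
        using mid by (simp add: nth_append)
    qed
  qed
  show ?thesis
  proof
    assume "interval V E U xs x y"
    then have xs: "list_path V E xs" "length xs \<ge> 2" "hd xs = x" "last xs = y" "x \<in> U" "y \<in> U"
      and inner_idx: "\<forall>i. 0 < i \<and> i < length xs - 1 \<longrightarrow> xs ! i \<notin> U"
      unfolding interval_def is_path_FinP_iff by auto
    have "xs = x # butlast (tl xs) @ [y]"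
      using xs(2-4) by (cases xs) auto
    with xs inner_idx inner[of "butlast (tl xs)"] show ?rhs
      by metis
  next
    assume ?rhs
    then obtain mid where xs: "x \<in> U" "y \<in> U" "list_path V E xs" "xs = x # mid @ [y]"
      and mid: "\<forall>v\<in>set mid. v \<notin> U"
      by blast
    have "\<forall>i. 0 < i \<and> i < length xs - 1 \<longrightarrow> xs ! i \<notin> U"
      unfolding xs(4) using mid by (rule iffD2[OF inner])
    with xs show "interval V E U xs x y"
      unfolding interval_def is_path_FinP_iff by simp
  qed
qed

lemma list_path_filter_interval_edges:
  assumes "list_path V E xs" "hd xs \<in> U" "last xs \<in> U"
  shows "list_path U (interval_edges V E U) (filter (\<lambda>v. v \<in> U) xs)"
  using assms
proof (induction "length xs" arbitrary: xs rule: less_induct)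
  case less
  obtain x rest where xs: "xs = x # rest"
    using less.prems(1) by (cases xs) (auto simp: list_path_def)
  show ?case
  proof (cases "\<exists>v\<in>set rest. v \<in> U")
    case False
    with less.prems(2,3) xs have "filter (\<lambda>v. v \<in> U) xs = [x]"
      by (cases "rest = []") auto
    with less.prems(2) xs show ?thesis
      by (simp add: list_path_def)
  next
    case True
    then obtain mid y R where rest: "rest = mid @ y # R" "y \<in> U" "\<forall>v\<in>set mid. v \<notin> U"
      using split_list_first_prop[OF True] by blast
    have "list_path V E ((x # mid @ [y]) @ R)" "list_path V E ((x # mid) @ (y # R))"
      using less.prems(1) xs rest(1) by simp_all
    then have "list_path V E (x # mid @ [y])" "list_path V E (y # R)"
      by (blast dest: list_path_appendD1 list_path_appendD2)+
    then have edge: "(x, y) \<in> interval_edges V E U"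
      using less.prems(2) xs rest(2,3) by (auto simp: interval_edges_def interval_iff)
    have "list_path U (interval_edges V E U) (filter (\<lambda>v. v \<in> U) (y # R))"
      using less.hyps[of "y # R"] \<open>list_path V E (y # R)\<close> rest less.prems(3) xs by simp
    then show ?thesis
      using edge less.prems(2) xs rest list_path_append[of "[x]" "filter (\<lambda>v. v \<in> U) (y # R)"]
      by (simp add: list_path_def)
  qed
qed

lemma interval_path_unfold:
  assumes "list_path U (interval_edges V E U) ys" "U \<subseteq> V"
  shows "\<exists>zs. list_path V E zs \<and> hd zs = hd ys \<and> last zs = last ys \<and> filter (\<lambda>v. v \<in> U) zs = ys"
  using assms(1)
proof (induction ys)
  case (Cons x ys)
  show ?case
  proof (cases "ys = []")
    case True
    with Cons.prems assms(2) show ?thesis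
      by (auto simp: list_path_def intro!: exI[of _ "[x]"])
  next
    case False
    with Cons.prems have x: "x \<in> U" "(x, hd ys) \<in> interval_edges V E U"
      and ys: "list_path U (interval_edges V E U) ys"
      using list_path_append[of "[x]" ys] by (auto simp: list_path_def)
    obtain zs where zs: "list_path V E zs" "hd zs = hd ys" "last zs = last ys" "filter (\<lambda>v. v \<in> U) zs = ys"
      using Cons.IH[OF ys] by blast
    obtain mid where mid: "list_path V E ((x # mid) @ [hd ys])" "\<forall>v\<in>set mid. v \<notin> U"
      using x(2) by (auto simp: interval_edges_def interval_iff)
    have "zs \<noteq> []"
      using zs(1) by (simp add: list_path_def)
    from mid(1) have "list_path V E (x # mid)" "(last (x # mid), hd zs) \<in> E"
      using zs(2) list_path_append[of "x # mid" "[hd ys]"] by auto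
    then have "list_path V E ((x # mid) @ zs)"
      using zs(1) list_path_append[OF _ \<open>zs \<noteq> []\<close>, of "x # mid"] by blast
    moreover have "last ((x # mid) @ zs) = last (x # ys)"
      using zs(1,3) False by (simp add: list_path_def)
    moreover have "filter (\<lambda>v. v \<in> U) ((x # mid) @ zs) = x # ys"
      using x(1) mid(2) zs(4) by simp
    ultimately show ?thesis
      by (metis append_Cons list.sel(1))
  qed
qed (simp add: list_path_def)

definition entry_nodes :: "'a set \<Rightarrow> ('a \<times> 'a) set \<Rightarrow> 'a set \<Rightarrow> 'a \<Rightarrow> 'a set" where
  "entry_nodes V E U s = {n \<in> U. \<exists>xs. list_path V E xs \<and> hd xs = s \<and> last xs = n \<and>
      (\<forall>x\<in>set (butlast xs). x \<notin> U)}"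

lemma Vi_eq_entry_nodes: "Vi V E p s = entry_nodes V E (Vp V E p) s"
  unfolding Vi_def entry_nodes_def is_path_FinP_iff ..

lemma entry_interval_path_unfold:
  assumes "list_path U (interval_edges V E U) ys" "hd ys \<in> entry_nodes V E U s" "U \<subseteq> V"
  obtains L where "list_path V E L" "hd L = s" "last L = last ys" "filter (\<lambda>v. v \<in> U) L = ys"
proof -
  obtain sp where sp: "list_path V E sp" "hd sp = s" "last sp = hd ys" "\<forall>x\<in>set (butlast sp). x \<notin> U"
    using assms(2) by (auto simp: entry_nodes_def)
  obtain zs where zs: "list_path V E zs" "hd zs = hd ys" "last zs = last ys" "filter (\<lambda>v. v \<in> U) zs = ys"
    using interval_path_unfold[OF assms(1,3)] by blast
  have sp_split: "sp = butlast sp @ [hd zs]"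
    using sp(1,3) zs(2) by (metis append_butlast_last_id list_path_def)
  show ?thesis
  proof (cases "butlast sp = []")
    case True
    with sp(2) sp_split have "hd zs = s"
      by (metis append_Nil list.sel(1))
    with zs show ?thesis
      by (intro that) auto
  next
    case False
    have "list_path V E (butlast sp @ [hd zs])"
      using sp(1) sp_split by metis
    then have "list_path V E (butlast sp)" "(last (butlast sp), hd zs) \<in> E"
      using False list_path_append[of "butlast sp" "[hd zs]"] by auto
    with zs(1) have "list_path V E (butlast sp @ zs)"
      using False list_path_append[of "butlast sp" zs] by (auto simp: list_path_def)
    moreover have "hd (butlast sp @ zs) = s"
      using False sp(2) sp_split by (metis hd_append)
    moreover have "last (butlast sp @ zs) = last ys"
      using zs(1,3) by (simp add: list_path_def)
    moreover have "filter (\<lambda>v. v \<in> U) (butlast sp @ zs) = ys"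
      using sp(4) zs(4) by simp
    ultimately show ?thesis
      using that by blast
  qed
qed

lemma interval_edges_succs_not_empty:
  assumes "list_path V E (x # xs)" "x \<in> U" "xs \<noteq> []" "last xs \<in> U"
  shows "succs (interval_edges V E U) x \<noteq> {}"
proof -
  have "filter (\<lambda>v. v \<in> U) xs \<noteq> []"
    using assms(3,4) by (auto simp: filter_empty_conv)
  moreover have "list_path U (interval_edges V E U) ([x] @ filter (\<lambda>v. v \<in> U) xs)"
    using list_path_filter_interval_edges[OF assms(1)] assms(2-4) by simp
  ultimately have "(x, hd (filter (\<lambda>v. v \<in> U) xs)) \<in> interval_edges V E U"
    by (simp add: list_path_append del: append_Cons append_Nil)
  then show ?thesis
    by (auto simp: succs_def)
qed

lemma cycle_maximal_path:
  assumes "list_path V E C" "length C \<ge> 2" "last C = hd C"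
  obtains \<sigma> where "maximal_path V E \<sigma>" "at \<sigma> 0 = hd C" "pnodes \<sigma> \<subseteq> set C"
proof
  define m where "m = length C - 1"
  define cyc where "cyc k = C ! (k mod m)" for k
  have m: "0 < m" "m < length C"
    using assms(2) by (auto simp: m_def)
  have cyc_in: "cyc k \<in> set C" for k
    using m unfolding cyc_def by (meson mod_less_divisor nth_mem order.strict_trans)
  have C_step: "(C ! j, C ! Suc j) \<in> E" if "j < m" for j
    using assms(1) that m unfolding list_path_def by (auto intro: successively_nth)
  have C_m: "C ! m = C ! 0"
    using assms(1,3) m unfolding m_def by (simp add: hd_conv_nth last_conv_nth list_path_def)
  have "(cyc k, cyc (Suc k)) \<in> E" for k
  proof (cases "Suc (k mod m) = m")
    case True
    then have "Suc k mod m = 0"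
      by (simp add: mod_Suc)
    then show ?thesis
      unfolding cyc_def using C_step[of "k mod m"] True C_m by simp
  next
    case False
    then have "Suc k mod m = Suc (k mod m)"
      by (simp add: mod_Suc)
    then show ?thesis
      unfolding cyc_def using C_step[of "k mod m"] m(1) by simp
  qed
  moreover have "set C \<subseteq> V"
    using assms(1) by (simp add: list_path_def)
  ultimately show "maximal_path V E (InfP cyc)"
    using cyc_in by (auto simp: maximal_path_def is_path_def)
  have "C \<noteq> []"
    using m by auto
  then show "at (InfP cyc) 0 = hd C"
    by (simp add: cyc_def hd_conv_nth)
  show "pnodes (InfP cyc) \<subseteq> set C"
    using cyc_in by auto
qed

lemma maximal_path_lifting_finite_interval_path:
  assumes "E \<subseteq> V \<times> V" "U \<subseteq> V"
    and ys: "list_path U (interval_edges V E U) ys" "succs (interval_edges V E U) (last ys) = {}"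
    and "hd ys \<in> entry_nodes V E U s"
  obtains \<pi> where "maximal_path V E \<pi>" "at \<pi> 0 = s" "pnodes \<pi> \<inter> U \<subseteq> set ys"
proof -
  obtain L where L: "list_path V E L" "hd L = s" "last L = last ys" "filter (\<lambda>v. v \<in> U) L = ys"
    using entry_interval_path_unfold[OF ys(1) assms(5,2)] by blast
  have last_ys: "last ys \<in> U" "last ys \<in> set ys"
    using ys(1) by (auto simp: list_path_def)
  then obtain \<sigma> where \<sigma>: "maximal_path V E \<sigma>" "at \<sigma> 0 = last ys"
    using maximal_path_exists[OF assms(1)] assms(2) by blast
  have "at \<sigma> k \<notin> U" if "valid_idx \<sigma> k" "0 < k" for k
  proof
    assume "at \<sigma> k \<in> U"
    have "list_path V E (path_take (Suc k) \<sigma>)"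
      using list_path_path_take \<sigma>(1) that(1) by (auto simp: maximal_path_def)
    moreover have "path_take (Suc k) \<sigma> = last ys # map (at \<sigma>) [1..<Suc k]"
      using \<sigma>(2) by (simp add: path_take_def upt_conv_Cons del: upt_Suc)
    ultimately have "succs (interval_edges V E U) (last ys) \<noteq> {}"
      using interval_edges_succs_not_empty last_ys(1) that(2) \<open>at \<sigma> k \<in> U\<close> by fastforce
    with ys(2) show False by simp
  qed
  then have \<sigma>_U: "pnodes \<sigma> \<inter> U \<subseteq> set ys"
    using \<sigma>(2) last_ys(2) by (auto simp: pnodes_def) (metis gr0I)
  obtain \<pi> where \<pi>: "maximal_path V E \<pi>" "path_prefix L \<pi>" "pnodes \<pi> = set L \<union> pnodes \<sigma>"
    using maximal_path_concat[OF \<sigma>(1) L(1)] \<sigma>(2) L(3) by metis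
  show ?thesis
  proof
    show "maximal_path V E \<pi>" by (fact \<pi>(1))
    show "at \<pi> 0 = s"
      using at_0_path_prefix[OF \<pi>(2)] L(1,2) by (simp add: list_path_def)
    show "pnodes \<pi> \<inter> U \<subseteq> set ys"
      using \<pi>(3) \<sigma>_U L(4) by auto
  qed
qed

lemma maximal_path_lifting_infinite_interval_path:
  assumes "finite U" "U \<subseteq> V"
    and f: "is_path U (interval_edges V E U) (InfP f)" "f 0 \<in> entry_nodes V E U s"
  obtains \<pi> where "maximal_path V E \<pi>" "at \<pi> 0 = s" "pnodes \<pi> \<inter> U \<subseteq> range f"
proof -
  have "range f \<subseteq> U"
    using f(1) by (auto simp: is_path_def)
  then have "\<not> inj f"
    using assms(1) finite_subset infinite_UNIV_nat finite_imageD by blast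
  then obtain i j where ij: "i < j" "f i = f j"
    unfolding inj_def by (metis linorder_neqE_nat)
  define ys where "ys = map f [0..<Suc j]"
  have ys: "list_path U (interval_edges V E U) ys"
  proof -
    have "at (InfP f) = f"
      by (rule ext) simp
    then show ?thesis
      using list_path_path_take[OF f(1), of j] by (simp add: ys_def path_take_def)
  qed
  have ys_ends: "hd ys = f 0" "last ys = f j"
    by (simp_all add: ys_def hd_map last_map del: upt_Suc)
  obtain L where L: "list_path V E L" "hd L = s" "last L = f j" "filter (\<lambda>v. v \<in> U) L = ys"
    using entry_interval_path_unfold[OF ys _ assms(2)] f(2) ys_ends by metis
  have "drop i ys \<noteq> []"
    using ij(1) by (simp add: ys_def)
  then have "list_path U (interval_edges V E U) (drop i ys)"
    using list_path_appendD2[of U _ "take i ys"] ys by (metis append_take_drop_id)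
  then obtain C where C: "list_path V E C" "hd C = f i" "last C = f j" "filter (\<lambda>v. v \<in> U) C = drop i ys"
  proof -
    have "hd (drop i ys) = f i" "last (drop i ys) = f j"
      using ij(1) ys_ends(2) \<open>drop i ys \<noteq> []\<close>
      by (simp_all add: ys_def hd_drop_conv_nth last_drop del: upt_Suc)
    then show ?thesis
      using interval_path_unfold[OF \<open>list_path U _ (drop i ys)\<close> assms(2)] that by metis
  qed
  have "2 \<le> length (drop i ys)"
    using ij(1) by (simp add: ys_def)
  also have "\<dots> \<le> length C"
    using C(4) length_filter_le by metis
  finally obtain \<sigma> where \<sigma>: "maximal_path V E \<sigma>" "at \<sigma> 0 = f j" "pnodes \<sigma> \<subseteq> set C"
    using cycle_maximal_path[OF C(1)] C(2,3) ij(2) by metis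
  obtain \<pi> where \<pi>: "maximal_path V E \<pi>" "path_prefix L \<pi>" "pnodes \<pi> = set L \<union> pnodes \<sigma>"
    using maximal_path_concat[OF \<sigma>(1) L(1)] \<sigma>(2) L(3) by metis
  show ?thesis
  proof
    show "maximal_path V E \<pi>" by (fact \<pi>(1))
    show "at \<pi> 0 = s"
      using at_0_path_prefix[OF \<pi>(2)] L(1,2) by (simp add: list_path_def)
    have "set C \<inter> U \<subseteq> set (drop i ys)"
      unfolding C(4)[symmetric] by auto
    then have "set C \<inter> U \<subseteq> set ys"
      using set_drop_subset by fastforce
    moreover have "set L \<inter> U \<subseteq> set ys"
      using L(4) by auto
    ultimately show "pnodes \<pi> \<inter> U \<subseteq> range f"
      using \<pi>(3) \<sigma>(3) by (auto simp: ys_def)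
  qed
qed

lemma maximal_path_lifting_interval_path:
  assumes "E \<subseteq> V \<times> V" "finite U" "U \<subseteq> V"
    and \<rho>: "maximal_path U (interval_edges V E U) \<rho>" "at \<rho> 0 \<in> entry_nodes V E U s"
  obtains \<pi> where "maximal_path V E \<pi>" "at \<pi> 0 = s" "pnodes \<pi> \<inter> U \<subseteq> pnodes \<rho>"
proof (cases \<rho>)
  case (FinP ys)
  with \<rho> have "list_path U (interval_edges V E U) ys" "succs (interval_edges V E U) (last ys) = {}"
    "hd ys \<in> entry_nodes V E U s"
    by (auto simp: maximal_path_def is_path_FinP_iff list_path_def hd_conv_nth)
  with FinP show ?thesis
    using maximal_path_lifting_finite_interval_path[OF assms(1,3)] that by auto
next
  case (InfP f)
  with \<rho> show ?thesis
    using maximal_path_lifting_infinite_interval_path[OF assms(2,3)] that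
    by (auto simp: maximal_path_def)
qed

lemma Vp_minus_subset_pnodes:
  assumes "(p, s) \<in> E" "maximal_path V E \<pi>" "at \<pi> 0 = s" "p \<in> V"
  shows "Vp V E p - {p} \<subseteq> pnodes \<pi>"
proof -
  have "s \<in> V" "s \<in> pnodes \<pi>"
    using assms(2,3) by (auto simp: maximal_path_def is_path_def pnodes_def)
  with assms(1,4) have "list_path V E [p, s]"
    by (simp add: list_path_def)
  then obtain \<pi>' where \<pi>': "maximal_path V E \<pi>'" "path_prefix [p, s] \<pi>'"
    "pnodes \<pi>' = {p, s} \<union> pnodes \<pi>"
    using maximal_path_concat[OF assms(2)] assms(3) by (metis last.simps list.distinct(1) set_simps)
  then have "Vp V E p \<subseteq> pnodes \<pi>'"
    using at_0_path_prefix[OF \<pi>'(2)] unfolding Vp_def by auto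
  with \<pi>'(3) \<open>s \<in> pnodes \<pi>\<close> show ?thesis
    by auto
qed

lemma interval_path_of_maximal_path:
  assumes "E \<subseteq> V \<times> V" "finite W" "W \<subseteq> U" "W \<subseteq> pnodes \<pi>" "U \<inter> pnodes \<pi> \<noteq> {}"
    and \<pi>: "maximal_path V E \<pi>" "at \<pi> 0 = s"
  obtains \<rho> where "maximal_path U (interval_edges V E U) \<rho>" "at \<rho> 0 \<in> entry_nodes V E U s"
    "fo_order W \<rho> = fo_order W \<pi>"
proof -
  obtain u where u: "u \<in> U" "u \<in> pnodes \<pi>"
    using assms(5) by blast
  obtain N where N: "valid_idx \<pi> N" "at \<pi> N \<in> insert u W" "insert u W \<subseteq> set (path_take (Suc N) \<pi>)"
    using path_take_covers[of "insert u W" \<pi>] assms(2,4) u(2) by blast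
  define xs where "xs = path_take (Suc N) \<pi>"
  have xs: "list_path V E xs" "path_prefix xs \<pi>"
    using list_path_path_take[OF _ N(1)] path_prefix_path_take[OF N(1)] \<pi>(1)
    by (auto simp: xs_def maximal_path_def)
  have xs_ends: "hd xs = s" "last xs \<in> U"
    using \<pi>(2) N(2) u(1) assms(3) by (auto simp: xs_def path_take_def hd_map last_map simp del: upt_Suc)
  obtain pre y R where split: "xs = pre @ y # R" "y \<in> U" "\<forall>v\<in>set pre. v \<notin> U"
    using split_list_first_prop[of xs "\<lambda>v. v \<in> U"] N(3) u(1) by (auto simp: xs_def)
  have "list_path V E ((pre @ [y]) @ R)" "list_path V E (pre @ (y # R))"
    using xs(1) split(1) by simp_all
  then have entry_path: "list_path V E (pre @ [y])" and tail: "list_path V E (y # R)"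
    by (blast dest: list_path_appendD1 list_path_appendD2)+
  have "hd (pre @ [y]) = s"
    using xs_ends(1) split(1) by (cases pre) auto
  with entry_path split(2,3) have y_entry: "y \<in> entry_nodes V E U s"
    unfolding entry_nodes_def by (auto intro!: exI[of _ "pre @ [y]"])
  have filter_xs: "filter (\<lambda>v. v \<in> U) xs = y # filter (\<lambda>v. v \<in> U) R"
    using split by simp
  have "last (y # R) \<in> U"
    using xs_ends(2) split(1) by (cases R) auto
  then have "list_path U (interval_edges V E U) (filter (\<lambda>v. v \<in> U) xs)"
    using list_path_filter_interval_edges[OF tail] split(2) filter_xs by simp
  then obtain \<rho> where \<rho>: "maximal_path U (interval_edges V E U) \<rho>"
    "path_prefix (filter (\<lambda>v. v \<in> U) xs) \<rho>"
    using maximal_path_extending[OF interval_edges_subset] by blast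
  show ?thesis
  proof
    show "maximal_path U (interval_edges V E U) \<rho>" by (fact \<rho>(1))
    show "at \<rho> 0 \<in> entry_nodes V E U s"
      using at_0_path_prefix[OF \<rho>(2)] filter_xs y_entry by simp
    show "fo_order W \<rho> = fo_order W \<pi>"
      using fo_order_filter_prefix[OF xs(2) \<rho>(2) assms(3)] N(3) by (simp add: xs_def)
  qed
qed

lemma maximal_path_of_interval_path:
  assumes "E \<subseteq> V \<times> V" "U \<subseteq> V" "finite W" "W \<subseteq> U" "W \<subseteq> pnodes \<rho>"
    and \<rho>: "maximal_path U (interval_edges V E U) \<rho>" "at \<rho> 0 \<in> entry_nodes V E U s"
  obtains \<pi> where "maximal_path V E \<pi>" "at \<pi> 0 = s" "fo_order W \<pi> = fo_order W \<rho>"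
proof -
  have \<rho>_path: "is_path U (interval_edges V E U) \<rho>"
    using \<rho>(1) by (simp add: maximal_path_def)
  then have "at \<rho> 0 \<in> pnodes \<rho>"
    by (auto simp: is_path_def pnodes_def)
  then obtain N where N: "valid_idx \<rho> N" "insert (at \<rho> 0) W \<subseteq> set (path_take (Suc N) \<rho>)"
    using path_take_covers[of "insert (at \<rho> 0) W" \<rho>] assms(3,5) by blast
  define ys where "ys = path_take (Suc N) \<rho>"
  have ys: "list_path U (interval_edges V E U) ys" "path_prefix ys \<rho>" "hd ys = at \<rho> 0"
    using list_path_path_take[OF \<rho>_path N(1)] path_prefix_path_take[OF N(1)]
    by (simp_all add: ys_def path_take_def hd_map del: upt_Suc)
  obtain L where L: "list_path V E L" "hd L = s" "filter (\<lambda>v. v \<in> U) L = ys"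
    using entry_interval_path_unfold[OF ys(1) _ assms(2)] ys(3) \<rho>(2) by metis
  obtain \<pi> where \<pi>: "maximal_path V E \<pi>" "path_prefix L \<pi>"
    using maximal_path_extending[OF assms(1) L(1)] by blast
  show ?thesis
  proof
    show "maximal_path V E \<pi>" by (fact \<pi>(1))
    show "at \<pi> 0 = s"
      using at_0_path_prefix[OF \<pi>(2)] L(1,2) by (simp add: list_path_def)
    have "W \<subseteq> set L"
      using N(2) L(3) by (auto simp: ys_def[symmetric])
    then show "fo_order W \<pi> = fo_order W \<rho>"
      using fo_order_filter_prefix[OF \<pi>(2) _ assms(4)] L(3) ys(2) by simp
  qed
qed

theorem lemma4p9:
  fixes V :: "'a set" and E :: "('a \<times> 'a) set" and p s1 s2 s :: 'a
  assumes "cfg V E"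
    and "p \<in> V"
    and "s1 \<noteq> s2" and "succs E p = {s1, s2}"
    and "card (succs (Ap_edges V E p) p) \<ge> 2"
    and "s \<in> {s1, s2}"
  shows "(\<forall>\<pi>. maximal_path V E \<pi> \<and> at \<pi> 0 = s \<longrightarrow>
            (\<exists>\<rho>. maximal_path (Vp V E p) (Ap_edges V E p) \<rho> \<and> at \<rho> 0 \<in> Vi V E p s \<and>
                 fo_order (Vp V E p - {p}) \<rho> = fo_order (Vp V E p - {p}) \<pi>))
       \<and> (\<forall>\<rho>. maximal_path (Vp V E p) (Ap_edges V E p) \<rho> \<and> at \<rho> 0 \<in> Vi V E p s \<longrightarrow>
            (\<exists>\<pi>. maximal_path V E \<pi> \<and> at \<pi> 0 = s \<and>
                 fo_order (Vp V E p - {p}) \<pi> = fo_order (Vp V E p - {p}) \<rho>))"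
proof -
  let ?U = "Vp V E p"
  have E: "E \<subseteq> V \<times> V" and U: "?U \<subseteq> V" "finite ?U"
    using assms(1) finite_subset[of ?U V] by (auto simp: cfg_def Vp_def)
  have ps: "(p, s) \<in> E"
    using assms(4,6) by (auto simp: succs_def)
  have "succs (Ap_edges V E p) p \<subseteq> ?U"
    using interval_edges_subset by (auto simp: Ap_edges_eq_interval_edges succs_def)
  moreover have "\<not> succs (Ap_edges V E p) p \<subseteq> {p}"
    using card_mono[of "{p}" "succs (Ap_edges V E p) p"] assms(5) by auto
  ultimately have "?U - {p} \<noteq> {}"
    by blast
  show ?thesis
    unfolding Ap_edges_eq_interval_edges Vi_eq_entry_nodes
  proof (intro conjI allI impI; elim conjE)
    fix \<pi> assume \<pi>: "maximal_path V E \<pi>" "at \<pi> 0 = s"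
    have "?U - {p} \<subseteq> pnodes \<pi>"
      using Vp_minus_subset_pnodes[OF ps \<pi> assms(2)] .
    with \<open>?U - {p} \<noteq> {}\<close> show "\<exists>\<rho>. maximal_path ?U (interval_edges V E ?U) \<rho> \<and>
        at \<rho> 0 \<in> entry_nodes V E ?U s \<and> fo_order (?U - {p}) \<rho> = fo_order (?U - {p}) \<pi>"
      using interval_path_of_maximal_path[OF E _ _ _ _ \<pi>, of "?U - {p}" ?U] U(2) by blast
  next
    fix \<rho> assume \<rho>: "maximal_path ?U (interval_edges V E ?U) \<rho>" "at \<rho> 0 \<in> entry_nodes V E ?U s"
    obtain \<pi> where "maximal_path V E \<pi>" "at \<pi> 0 = s" "pnodes \<pi> \<inter> ?U \<subseteq> pnodes \<rho>"
      using maximal_path_lifting_interval_path[OF E U(2,1) \<rho>] by blast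
    then have "?U - {p} \<subseteq> pnodes \<rho>"
      using Vp_minus_subset_pnodes[OF ps _ _ assms(2)] by blast
    then show "\<exists>\<pi>. maximal_path V E \<pi> \<and> at \<pi> 0 = s \<and> fo_order (?U - {p}) \<pi> = fo_order (?U - {p}) \<rho>"
      using maximal_path_of_interval_path[OF E U(1) _ _ _ \<rho>, of "?U - {p}"] U(2) by blast
  qed
qed

end
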